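(* Let $ABC$ be a triangle with incenter $I$ and orthocenter $H$, and let $H_A, H_B, H_C$ be the orthocenters of the triangles $BIC$, $CIA$, $AIB$ respectively. The circumcircles of the triangles $AH_BH_C$, $BH_CH_A$, $CH_AH_B$ pass through a common point $X$. Let $O_A, O_B, O_C$ be the circumcenters of these three triangles and let $O_r$ be the circumcenter of triangle $O_AO_BO_C$. Then $X$ lies on the line $O_rH$. *)

theory Defs
  imports "HOL-Analysis.Analysis"
begin

definition triangle :: "complex \<Rightarrow> complex \<Rightarrow> complex \<Rightarrow> bool" where
  "triangle A B C \<longleftrightarrow> \<not> collinear {A, B, C}"

definition incenter :: "complex \<Rightarrow> complex \<Rightarrow> complex \<Rightarrow> complex" where
  "incenter A B C =
     (dist B C *\<^sub>R A + dist C A *\<^sub>R B + dist A B *\<^sub>R C) /\<^sub>R (dist B C + dist C A + dist A B)"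

definition orthocenter :: "complex \<Rightarrow> complex \<Rightarrow> complex \<Rightarrow> complex" where
  "orthocenter A B C =
     (THE H. inner (H - A) (B - C) = 0 \<and> inner (H - B) (C - A) = 0 \<and> inner (H - C) (A - B) = 0)"

definition circumcenter :: "complex \<Rightarrow> complex \<Rightarrow> complex \<Rightarrow> complex" where
  "circumcenter A B C = (THE Z. dist Z A = dist Z B \<and> dist Z B = dist Z C)"

definition on_circumcircle :: "complex \<Rightarrow> complex \<Rightarrow> complex \<Rightarrow> complex \<Rightarrow> bool" where
  "on_circumcircle X P Q R \<longleftrightarrow> dist X (circumcenter P Q R) = dist P (circumcenter P Q R)"

end

theory Submission
  imports Defs
begin

(* Describe the triangle by its tangent lengths x, y, z > 0, so that BC = y + z, CA = z + x,
   AB = x + y.  Then every point of the configuration has barycentric coordinates that are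
   polynomials in x, y, z, e.g. I = (y + z : z + x : x + y) and H_A = (y + z : x - z : x - y),
   and by the barycentric distance formula every perpendicularity, equidistance and collinearity
   becomes a polynomial identity.  This gives explicit coordinates of O_A, O_B, O_C, O_r and of a
   common point X of the three circles.  Any other common point has the same distances as X to
   the three non-collinear centres O_A, O_B, O_C, hence equals X. *)

lemma collinear_iff_Im_cnj_mult:
  fixes P Q R :: complex
  shows "collinear {P, Q, R} \<longleftrightarrow> Im (cnj (Q - P) * (R - P)) = 0"
proof -
  have "collinear {P, Q, R} \<longleftrightarrow> collinear {0, Q - P, R - P}"
    using collinear_3[of Q P R] by (simp add: insert_commute)
  also have "\<dots> \<longleftrightarrow> Im ((R - P) / (Q - P)) = 0"
    by (simp add: collinear_iff_Reals complex_is_Real_iff)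
  also have "\<dots> \<longleftrightarrow> Im (cnj (Q - P) * (R - P)) = 0"
    by (cases "Q = P") (auto simp: Im_divide complex_neq_0 algebra_simps)
  finally show ?thesis .
qed

lemma Im_cnj_mult_combination:
  "Im (cnj (a *\<^sub>R u + b *\<^sub>R v) * (c *\<^sub>R u + d *\<^sub>R v)) = (a * d - b * c) * Im (cnj u * v)"
  by (simp add: algebra_simps)

lemma eq_0_if_orthogonal_to_noncollinear:
  fixes w P Q R :: complex
  assumes "\<not> collinear {P, Q, R}" "inner w (Q - P) = 0" "inner w (R - P) = 0"
  shows "w = 0"
proof -
  define u v where "u = Q - P" and "v = R - P"
  have cross: "Re u * Im v - Im u * Re v \<noteq> 0"
    using assms(1) by (auto simp: collinear_iff_Im_cnj_mult u_def v_def algebra_simps)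
  have "Re w * Re u + Im w * Im u = 0" "Re w * Re v + Im w * Im v = 0"
    using assms(2,3) by (simp_all add: inner_complex_def u_def v_def)
  then have "Re w * (Re u * Im v - Im u * Re v) = 0" "Im w * (Re u * Im v - Im u * Re v) = 0"
    by algebra+
  with cross show "w = 0"
    by (simp add: complex_eq_iff)
qed

lemma inner_diff_eq_0_if_equidistant:
  fixes Z Z' P Q :: "'a::real_inner"
  assumes "dist Z P = dist Z Q" "dist Z' P = dist Z' Q"
  shows "inner (Z' - Z) (Q - P) = 0"
proof -
  have "inner (Z - P) (Z - P) = inner (Z - Q) (Z - Q)" "inner (Z' - P) (Z' - P) = inner (Z' - Q) (Z' - Q)"
    using assms by (simp_all add: dist_norm flip: power2_norm_eq_inner)
  then show ?thesis
    by (simp add: inner_commute algebra_simps)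
qed

lemma eq_if_same_dists_to_noncollinear:
  fixes X Y :: complex
  assumes "\<not> collinear {O1, O2, O3}"
    and "dist O1 X = dist O1 Y" "dist O2 X = dist O2 Y" "dist O3 X = dist O3 Y"
  shows "X = Y"
proof -
  have "inner (Y - X) (O2 - O1) = 0" "inner (Y - X) (O3 - O1) = 0"
    using inner_diff_eq_0_if_equidistant[of O1 X Y] assms(2-4) by (simp_all add: inner_commute)
  with assms(1) show ?thesis
    using eq_0_if_orthogonal_to_noncollinear by (metis eq_iff_diff_eq_0)
qed

lemma orthocenter_eqI:
  assumes "\<not> collinear {A, B, C}"
    and "inner (H - A) (B - C) = 0" "inner (H - B) (C - A) = 0" "inner (H - C) (A - B) = 0"
  shows "orthocenter A B C = H"
  unfolding orthocenter_def
proof (rule the_equality)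
  fix H' assume H': "inner (H' - A) (B - C) = 0 \<and> inner (H' - B) (C - A) = 0 \<and> inner (H' - C) (A - B) = 0"
  have "inner (H' - H) (B - C) = 0" "inner (H' - H) (A - C) = 0"
    using H' assms(2-4) by (simp_all add: algebra_simps)
  moreover have "\<not> collinear {C, B, A}"
    using assms(1) by (simp add: insert_commute)
  ultimately show "H' = H"
    using eq_0_if_orthogonal_to_noncollinear by (metis eq_iff_diff_eq_0)
qed (use assms in simp)

lemma circumcenter_eqI:
  assumes "\<not> collinear {A, B, C}" "dist Z A = dist Z B" "dist Z B = dist Z C"
  shows "circumcenter A B C = Z"
  unfolding circumcenter_def
proof (rule the_equality)
  fix Z' assume "dist Z' A = dist Z' B \<and> dist Z' B = dist Z' C"
  then have "inner (Z' - Z) (B - A) = 0" "inner (Z' - Z) (C - A) = 0"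
    using assms(2,3) inner_diff_eq_0_if_equidistant by (metis, metis)
  with assms(1) show "Z' = Z"
    using eq_0_if_orthogonal_to_noncollinear by (metis eq_iff_diff_eq_0)
qed (use assms in simp)

lemma dist_less_add_if_noncollinear:
  fixes A B C :: "'a::euclidean_space"
  assumes "\<not> collinear {A, B, C}"
  shows "dist B C < dist B A + dist A C"
proof -
  have "dist B C \<noteq> dist B A + dist A C"
    using assms by (auto simp: collinear_between_cases between)
  then show ?thesis
    using dist_triangle[of B C A] by linarith
qed

definition bary :: "'a::real_vector \<Rightarrow> 'a \<Rightarrow> 'a \<Rightarrow> real \<Rightarrow> real \<Rightarrow> real \<Rightarrow> 'a" where
  "bary A B C p q r = (p *\<^sub>R A + q *\<^sub>R B + r *\<^sub>R C) /\<^sub>R (p + q + r)"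

lemma bary_rotate: "bary B C A q r p = bary A B C p q r"
  by (simp add: bary_def add_ac)

lemma bary_vertices: "A = bary A B C 1 0 0" "B = bary A B C 0 1 0" "C = bary A B C 0 0 1"
  by (simp_all add: bary_def)

lemma incenter_eq_bary: "incenter A B C = bary A B C (dist B C) (dist C A) (dist A B)"
  by (simp add: incenter_def bary_def)

lemma incenter_rotate: "incenter B C A = incenter A B C"
  by (simp add: incenter_def dist_commute add_ac)

lemma bary_diff:
  fixes A B C :: "'a::real_vector" and p1 p2 p3 q1 q2 q3 :: real
  defines "s \<equiv> p1 + p2 + p3" and "t \<equiv> q1 + q2 + q3"
  assumes "s \<noteq> 0" "t \<noteq> 0"
  shows "bary A B C p1 p2 p3 - bary A B C q1 q2 q3
         = (1 / (s * t)) *\<^sub>R ((t * p1 - s * q1) *\<^sub>R A + (t * p2 - s * q2) *\<^sub>R B + (t * p3 - s * q3) *\<^sub>R C)"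
proof -
  have "bary A B C p1 p2 p3 - bary A B C q1 q2 q3
        = (1 / (s * t)) *\<^sub>R (t *\<^sub>R (p1 *\<^sub>R A + p2 *\<^sub>R B + p3 *\<^sub>R C) - s *\<^sub>R (q1 *\<^sub>R A + q2 *\<^sub>R B + q3 *\<^sub>R C))"
    using assms by (simp add: bary_def s_def [symmetric] t_def [symmetric] scaleR_diff_right inverse_eq_divide)
  also have "t *\<^sub>R (p1 *\<^sub>R A + p2 *\<^sub>R B + p3 *\<^sub>R C) - s *\<^sub>R (q1 *\<^sub>R A + q2 *\<^sub>R B + q3 *\<^sub>R C)
             = (t * p1 - s * q1) *\<^sub>R A + (t * p2 - s * q2) *\<^sub>R B + (t * p3 - s * q3) *\<^sub>R C"
    by (simp add: algebra_simps)
  finally show ?thesis .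
qed

lemma zero_sum_combination:
  fixes A B C :: "'a::real_vector"
  assumes "d1 + d2 + d3 = 0"
  shows "d1 *\<^sub>R A + d2 *\<^sub>R B + d3 *\<^sub>R C = d2 *\<^sub>R (B - A) + d3 *\<^sub>R (C - A)"
proof -
  have "d1 *\<^sub>R A + d2 *\<^sub>R B + d3 *\<^sub>R C = (d1 + d2 + d3) *\<^sub>R A + d2 *\<^sub>R (B - A) + d3 *\<^sub>R (C - A)"
    by (simp add: algebra_simps)
  with assms show ?thesis by simp
qed

text \<open>The polarised barycentric distance formula.\<close>

definition bary_inner ::
  "'a::real_inner \<Rightarrow> 'a \<Rightarrow> 'a \<Rightarrow> real \<Rightarrow> real \<Rightarrow> real \<Rightarrow> real \<Rightarrow> real \<Rightarrow> real \<Rightarrow> real" where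
  "bary_inner A B C d1 d2 d3 e1 e2 e3 =
     - ((dist B C)\<^sup>2 * (d2 * e3 + d3 * e2) + (dist C A)\<^sup>2 * (d3 * e1 + d1 * e3)
        + (dist A B)\<^sup>2 * (d1 * e2 + d2 * e1)) / 2"

lemma inner_zero_sum_combination:
  fixes A B C :: "'a::real_inner"
  assumes "d1 + d2 + d3 = 0" "e1 + e2 + e3 = 0"
  shows "inner (d1 *\<^sub>R A + d2 *\<^sub>R B + d3 *\<^sub>R C) (e1 *\<^sub>R A + e2 *\<^sub>R B + e3 *\<^sub>R C)
         = bary_inner A B C d1 d2 d3 e1 e2 e3"
proof -
  define u v where "u = B - A" and "v = C - A"
  have lhs: "inner (d1 *\<^sub>R A + d2 *\<^sub>R B + d3 *\<^sub>R C) (e1 *\<^sub>R A + e2 *\<^sub>R B + e3 *\<^sub>R C)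
        = d2 * e2 * inner u u + (d2 * e3 + d3 * e2) * inner u v + d3 * e3 * inner v v"
    unfolding zero_sum_combination[OF assms(1)] zero_sum_combination[OF assms(2)]
      u_def [symmetric] v_def [symmetric]
    by (simp add: inner_commute[of v u] algebra_simps)
  have sides: "(dist B C)\<^sup>2 = inner u u - 2 * inner u v + inner v v" "(dist C A)\<^sup>2 = inner v v"
    "(dist A B)\<^sup>2 = inner u u"
    by (simp_all add: u_def v_def dist_norm power2_norm_eq_inner norm_minus_commute inner_commute algebra_simps)
  have d1: "d1 = - d2 - d3" and e1: "e1 = - e2 - e3"
    using assms by simp_all
  show ?thesis
    unfolding lhs unfolding bary_inner_def sides d1 e1 by (simp add: algebra_simps)
qed

lemma inner_bary_eq_0I:
  fixes A B C :: "'a::real_inner" and p1 p2 p3 q1 q2 q3 r1 r2 r3 s1 s2 s3 :: real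
  defines "sp \<equiv> p1 + p2 + p3" and "sq \<equiv> q1 + q2 + q3" and "sr \<equiv> r1 + r2 + r3" and "ss \<equiv> s1 + s2 + s3"
  assumes P: "P = bary A B C p1 p2 p3" and Q: "Q = bary A B C q1 q2 q3"
    and R: "R = bary A B C r1 r2 r3" and S: "S = bary A B C s1 s2 s3"
    and nonzero: "sp \<noteq> 0" "sq \<noteq> 0" "sr \<noteq> 0" "ss \<noteq> 0"
    and orthogonal: "bary_inner A B C (sq * p1 - sp * q1) (sq * p2 - sp * q2) (sq * p3 - sp * q3)
           (ss * r1 - sr * s1) (ss * r2 - sr * s2) (ss * r3 - sr * s3) = 0"
  shows "inner (P - Q) (R - S) = 0"
proof -
  have PQ: "P - Q = (1 / (sp * sq)) *\<^sub>R
      ((sq * p1 - sp * q1) *\<^sub>R A + (sq * p2 - sp * q2) *\<^sub>R B + (sq * p3 - sp * q3) *\<^sub>R C)"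
    unfolding P Q sp_def sq_def by (rule bary_diff) (use nonzero in \<open>simp_all add: sp_def sq_def\<close>)
  have RS: "R - S = (1 / (sr * ss)) *\<^sub>R
      ((ss * r1 - sr * s1) *\<^sub>R A + (ss * r2 - sr * s2) *\<^sub>R B + (ss * r3 - sr * s3) *\<^sub>R C)"
    unfolding R S sr_def ss_def by (rule bary_diff) (use nonzero in \<open>simp_all add: sr_def ss_def\<close>)
  have "inner (P - Q) (R - S) = (1 / (sp * sq)) * (1 / (sr * ss)) *
      bary_inner A B C (sq * p1 - sp * q1) (sq * p2 - sp * q2) (sq * p3 - sp * q3)
        (ss * r1 - sr * s1) (ss * r2 - sr * s2) (ss * r3 - sr * s3)"
    unfolding PQ RS inner_scaleR_left inner_scaleR_right
    by (subst inner_zero_sum_combination) (simp_all add: sp_def sq_def sr_def ss_def algebra_simps)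
  with orthogonal show ?thesis by simp
qed

lemma dist_bary_eqI:
  fixes A B C :: "'a::real_inner" and z1 z2 z3 p1 p2 p3 q1 q2 q3 :: real
  defines "sz \<equiv> z1 + z2 + z3" and "sp \<equiv> p1 + p2 + p3" and "sq \<equiv> q1 + q2 + q3"
  assumes Z: "Z = bary A B C z1 z2 z3" and P: "P = bary A B C p1 p2 p3" and Q: "Q = bary A B C q1 q2 q3"
    and nonzero: "sz \<noteq> 0" "sp \<noteq> 0" "sq \<noteq> 0"
    and equal: "sq\<^sup>2 * bary_inner A B C (sz * p1 - sp * z1) (sz * p2 - sp * z2) (sz * p3 - sp * z3)
                                   (sz * p1 - sp * z1) (sz * p2 - sp * z2) (sz * p3 - sp * z3)
       = sp\<^sup>2 * bary_inner A B C (sz * q1 - sq * z1) (sz * q2 - sq * z2) (sz * q3 - sq * z3)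
                                   (sz * q1 - sq * z1) (sz * q2 - sq * z2) (sz * q3 - sq * z3)"
  shows "dist Z P = dist Z Q"
proof -
  have PZ: "P - Z = (1 / (sp * sz)) *\<^sub>R
      ((sz * p1 - sp * z1) *\<^sub>R A + (sz * p2 - sp * z2) *\<^sub>R B + (sz * p3 - sp * z3) *\<^sub>R C)"
    unfolding Z P sp_def sz_def by (rule bary_diff) (use nonzero in \<open>simp_all add: sp_def sz_def\<close>)
  have QZ: "Q - Z = (1 / (sq * sz)) *\<^sub>R
      ((sz * q1 - sq * z1) *\<^sub>R A + (sz * q2 - sq * z2) *\<^sub>R B + (sz * q3 - sq * z3) *\<^sub>R C)"
    unfolding Z Q sq_def sz_def by (rule bary_diff) (use nonzero in \<open>simp_all add: sq_def sz_def\<close>)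
  define \<Phi>P where "\<Phi>P = bary_inner A B C (sz * p1 - sp * z1) (sz * p2 - sp * z2) (sz * p3 - sp * z3)
                                        (sz * p1 - sp * z1) (sz * p2 - sp * z2) (sz * p3 - sp * z3)"
  define \<Phi>Q where "\<Phi>Q = bary_inner A B C (sz * q1 - sq * z1) (sz * q2 - sq * z2) (sz * q3 - sq * z3)
                                        (sz * q1 - sq * z1) (sz * q2 - sq * z2) (sz * q3 - sq * z3)"
  have dist_P: "(dist P Z)\<^sup>2 = (1 / (sp * sz))\<^sup>2 * \<Phi>P"
    unfolding \<Phi>P_def dist_norm power2_norm_eq_inner PZ inner_scaleR_left inner_scaleR_right
    by (subst inner_zero_sum_combination) (simp_all add: sp_def sz_def algebra_simps power2_eq_square)
  have dist_Q: "(dist Q Z)\<^sup>2 = (1 / (sq * sz))\<^sup>2 * \<Phi>Q"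
    unfolding \<Phi>Q_def dist_norm power2_norm_eq_inner QZ inner_scaleR_left inner_scaleR_right
    by (subst inner_zero_sum_combination) (simp_all add: sq_def sz_def algebra_simps power2_eq_square)
  have "(dist P Z)\<^sup>2 = (dist Q Z)\<^sup>2"
    unfolding dist_P dist_Q using nonzero equal [folded \<Phi>P_def \<Phi>Q_def] by (simp add: field_simps)
  then show ?thesis
    by (simp add: dist_commute)
qed

lemma collinear_bary_iff:
  fixes A B C :: complex and p1 p2 p3 q1 q2 q3 r1 r2 r3 :: real
  defines "sp \<equiv> p1 + p2 + p3" and "sq \<equiv> q1 + q2 + q3" and "sr \<equiv> r1 + r2 + r3"
  assumes ABC: "\<not> collinear {A, B, C}"
    and P: "P = bary A B C p1 p2 p3" and Q: "Q = bary A B C q1 q2 q3" and R: "R = bary A B C r1 r2 r3"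
    and nonzero: "sp \<noteq> 0" "sq \<noteq> 0" "sr \<noteq> 0"
  shows "collinear {P, Q, R} \<longleftrightarrow> p1 * (q2 * r3 - q3 * r2) - p2 * (q1 * r3 - q3 * r1) + p3 * (q1 * r2 - q2 * r1) = 0"
proof -
  have QP: "Q - P = (1 / (sq * sp)) *\<^sub>R
      ((sp * q2 - sq * p2) *\<^sub>R (B - A) + (sp * q3 - sq * p3) *\<^sub>R (C - A))"
    unfolding Q P sp_def sq_def
    by (subst bary_diff, use nonzero in \<open>simp_all add: sp_def sq_def\<close>)
      (subst zero_sum_combination, simp_all add: algebra_simps)
  have RP: "R - P = (1 / (sr * sp)) *\<^sub>R
      ((sp * r2 - sr * p2) *\<^sub>R (B - A) + (sp * r3 - sr * p3) *\<^sub>R (C - A))"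
    unfolding R P sp_def sr_def
    by (subst bary_diff, use nonzero in \<open>simp_all add: sp_def sr_def\<close>)
      (subst zero_sum_combination, simp_all add: algebra_simps)
  have "(sp * q2 - sq * p2) * (sp * r3 - sr * p3) - (sp * q3 - sq * p3) * (sp * r2 - sr * p2)
        = sp * (p1 * (q2 * r3 - q3 * r2) - p2 * (q1 * r3 - q3 * r1) + p3 * (q1 * r2 - q2 * r1))"
    unfolding sp_def sq_def sr_def by algebra
  moreover have "Im (cnj (k *\<^sub>R w) * (l *\<^sub>R w')) = k * l * Im (cnj w * w')" for k l and w w' :: complex
    by simp
  ultimately have "Im (cnj (Q - P) * (R - P)) = 1 / (sq * sp) * (1 / (sr * sp)) * (sp
      * (p1 * (q2 * r3 - q3 * r2) - p2 * (q1 * r3 - q3 * r1) + p3 * (q1 * r2 - q2 * r1))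
      * Im (cnj (B - A) * (C - A)))"
    unfolding QP RP by (simp only: Im_cnj_mult_combination)
  moreover have "Im (cnj (B - A) * (C - A)) \<noteq> 0"
    using ABC by (simp add: collinear_iff_Im_cnj_mult)
  ultimately show ?thesis
    using nonzero by (simp add: collinear_iff_Im_cnj_mult)
qed


text \<open>\<open>conway x y z\<close> is Conway's \<open>S\<^sub>A = (b\<^sup>2 + c\<^sup>2 - a\<^sup>2) / 2\<close> for the sides
  \<open>a = y + z\<close>, \<open>b = z + x\<close>, \<open>c = x + y\<close>.\<close>

definition conway :: "real \<Rightarrow> real \<Rightarrow> real \<Rightarrow> real" where
  "conway x y z = x * (x + y + z) - y * z"

definition common_point_weight :: "real \<Rightarrow> real \<Rightarrow> real \<Rightarrow> real" where
  "common_point_weight x y z = x * (y + z) * (x * (y + z) - x\<^sup>2 + (2 * y - z) * (y - 2 * z))"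

locale tangent_lengths =
  fixes A B C :: complex and x y z :: real
  assumes noncollinear: "\<not> collinear {A, B, C}"
    and pos: "0 < x" "0 < y" "0 < z"
    and sides: "dist B C = y + z" "dist C A = z + x" "dist A B = x + y"

lemma tangent_lengths_exist:
  assumes "\<not> collinear {A, B, C}"
  obtains x y z where "tangent_lengths A B C x y z"
proof
  have "dist B C < dist B A + dist A C" "dist C A < dist C B + dist B A" "dist A B < dist A C + dist C B"
    using dist_less_add_if_noncollinear [of A B C] dist_less_add_if_noncollinear [of B C A]
      dist_less_add_if_noncollinear [of C A B] assms
    by (simp_all add: insert_commute)
  then show "tangent_lengths A B C ((dist C A + dist A B - dist B C) / 2)
      ((dist A B + dist B C - dist C A) / 2) ((dist B C + dist C A - dist A B) / 2)"
    using assms by unfold_locales (simp_all add: dist_commute field_simps)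
qed

context tangent_lengths
begin

lemma rotate: "tangent_lengths B C A y z x"
  using noncollinear pos sides by unfold_locales (simp_all add: insert_commute)

abbreviation "I \<equiv> incenter A B C"
abbreviation "H \<equiv> orthocenter A B C"
abbreviation "HA \<equiv> orthocenter B I C"
abbreviation "HB \<equiv> orthocenter C I A"
abbreviation "HC \<equiv> orthocenter A I B"
abbreviation "OA \<equiv> circumcenter A HB HC"
abbreviation "OB \<equiv> circumcenter B HC HA"
abbreviation "OC \<equiv> circumcenter C HA HB"
abbreviation "Or \<equiv> circumcenter OA OB OC"
abbreviation "X \<equiv> bary A B C (common_point_weight x y z) (common_point_weight y z x) (common_point_weight z x y)"

lemma I_eq: "I = bary A B C (y + z) (z + x) (x + y)"
  by (simp add: incenter_eq_bary sides)

lemma H_weights: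
  "conway y z x * conway z x y + conway z x y * conway x y z + conway x y z * conway y z x \<noteq> 0"
proof -
  have "conway y z x * conway z x y + conway z x y * conway x y z + conway x y z * conway y z x
        = 4 * x * y * z * (x + y + z)"
    unfolding conway_def by algebra
  with pos show ?thesis
    by simp
qed

lemma H_eq:
  "H = bary A B C (conway y z x * conway z x y) (conway z x y * conway x y z) (conway x y z * conway y z x)"
  by (rule orthocenter_eqI [OF noncollinear];
      rule inner_bary_eq_0I, (rule refl bary_vertices)+, (use H_weights in linarith)+,
      simp add: bary_inner_def sides conway_def, algebra)

lemma HA_eq: "HA = bary A B C (y + z) (x - z) (x - y)"
proof -
  have BIC: "\<not> collinear {B, I, C}"
    by (subst collinear_bary_iff [OF noncollinear bary_vertices(2) I_eq bary_vertices(3)])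
      (use pos in simp_all)
  show ?thesis
    by (rule orthocenter_eqI [OF BIC];
        rule inner_bary_eq_0I, (rule refl bary_vertices I_eq)+, (use pos in linarith)+,
        simp add: bary_inner_def sides, algebra)
qed

lemma HB_eq: "HB = bary A B C (y - z) (z + x) (y - x)"
  using tangent_lengths.HA_eq [OF rotate]
  by (simp only: incenter_rotate [of B C A] bary_rotate [of B C A])

lemma HC_eq: "HC = bary A B C (z - y) (z - x) (x + y)"
  using tangent_lengths.HB_eq [OF rotate]
  by (simp only: incenter_rotate [of B C A] bary_rotate [of B C A])

lemma OA_weights:
  "- x * (y - z)\<^sup>2 - (y + z) * (y\<^sup>2 - 4 * y * z + z\<^sup>2)
   + ((z - y) * x\<^sup>2 + (y + z) * (2 * z - y) * x + z * (z\<^sup>2 + 2 * y * z - y\<^sup>2))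
   + ((y - z) * x\<^sup>2 + (y + z) * (2 * y - z) * x + y * (y\<^sup>2 + 2 * y * z - z\<^sup>2)) \<noteq> 0"
proof -
  have "- x * (y - z)\<^sup>2 - (y + z) * (y\<^sup>2 - 4 * y * z + z\<^sup>2)
   + ((z - y) * x\<^sup>2 + (y + z) * (2 * z - y) * x + z * (z\<^sup>2 + 2 * y * z - y\<^sup>2))
   + ((y - z) * x\<^sup>2 + (y + z) * (2 * y - z) * x + y * (y\<^sup>2 + 2 * y * z - z\<^sup>2)) = 4 * y * z * (x + y + z)"
    by algebra
  with pos show ?thesis
    by simp
qed

lemma OA_eq:
  assumes "\<not> collinear {A, HB, HC}"
  shows "OA = bary A B C
    (- x * (y - z)\<^sup>2 - (y + z) * (y\<^sup>2 - 4 * y * z + z\<^sup>2))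
    ((z - y) * x\<^sup>2 + (y + z) * (2 * z - y) * x + z * (z\<^sup>2 + 2 * y * z - y\<^sup>2))
    ((y - z) * x\<^sup>2 + (y + z) * (2 * y - z) * x + y * (y\<^sup>2 + 2 * y * z - z\<^sup>2))"
  by (rule circumcenter_eqI [OF assms];
      rule dist_bary_eqI, (rule refl bary_vertices HB_eq HC_eq)+,
      (use OA_weights pos in linarith)+, simp add: bary_inner_def sides, algebra)

lemmas OB_weights = tangent_lengths.OA_weights [OF rotate]
lemmas OC_weights = tangent_lengths.OB_weights [OF rotate]

lemmas OB_eq = tangent_lengths.OA_eq [OF rotate,
  unfolded incenter_rotate [of B C A] bary_rotate [of B C A]]
lemmas OC_eq = tangent_lengths.OB_eq [OF rotate,
  unfolded incenter_rotate [of B C A] bary_rotate [of B C A]]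

lemma X_weights:
  assumes "x * (y - z)\<^sup>2 + y * (z - x)\<^sup>2 + z * (x - y)\<^sup>2 \<noteq> 0"
  shows "common_point_weight x y z + common_point_weight y z x + common_point_weight z x y \<noteq> 0"
proof -
  have "common_point_weight x y z + common_point_weight y z x + common_point_weight z x y
      = (x + y + z) * (x * (y - z)\<^sup>2 + y * (z - x)\<^sup>2 + z * (x - y)\<^sup>2)"
    unfolding common_point_weight_def by algebra
  with pos assms show ?thesis
    by simp
qed

lemma X_on_circle_A:
  assumes "\<not> collinear {A, HB, HC}" "x * (y - z)\<^sup>2 + y * (z - x)\<^sup>2 + z * (x - y)\<^sup>2 \<noteq> 0"
  shows "dist OA X = dist OA A"
  by (rule dist_bary_eqI, (rule refl bary_vertices OA_eq [OF assms(1)])+,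
      (use OA_weights X_weights [OF assms(2)] in linarith)+,
      simp add: bary_inner_def sides common_point_weight_def, algebra)

lemmas X_on_circle_B = tangent_lengths.X_on_circle_A [OF rotate,
  unfolded incenter_rotate [of B C A] bary_rotate [of B C A]]
lemmas X_on_circle_C = tangent_lengths.X_on_circle_B [OF rotate,
  unfolded incenter_rotate [of B C A] bary_rotate [of B C A]]

text \<open>The weights are those of \<open>H\<close> plus \<open>4xyz\<close> times \<open>(y + z - x : z + x - y : x + y - z)\<close>,
  the reflection of the Nagel point in \<open>I\<close>; so \<open>O\<^sub>r\<close> is the midpoint of these two points.\<close>

lemma Or_weights:
  "conway y z x * conway z x y + 4 * x * y * z * (y + z - x)
   + (conway z x y * conway x y z + 4 * x * y * z * (z + x - y))
   + (conway x y z * conway y z x + 4 * x * y * z * (x + y - z)) \<noteq> 0"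
proof -
  have "conway y z x * conway z x y + 4 * x * y * z * (y + z - x)
      + (conway z x y * conway x y z + 4 * x * y * z * (z + x - y))
      + (conway x y z * conway y z x + 4 * x * y * z * (x + y - z)) = 8 * x * y * z * (x + y + z)"
    unfolding conway_def by algebra
  with pos show ?thesis
    by simp
qed

context
  assumes A_HB_HC: "\<not> collinear {A, HB, HC}" and B_HC_HA: "\<not> collinear {B, HC, HA}"
    and C_HA_HB: "\<not> collinear {C, HA, HB}" and OA_OB_OC: "\<not> collinear {OA, OB, OC}"
begin

text \<open>The determinant of the weights of \<open>O\<^sub>A, O\<^sub>B, O\<^sub>C\<close> is \<open>-8xyz(x + y + z)\<^sup>3\<close> times
  the sum below, which for positive \<open>x, y, z\<close> vanishes only if \<open>x = y = z\<close>.\<close>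

lemma not_equilateral: "x * (y - z)\<^sup>2 + y * (z - x)\<^sup>2 + z * (x - y)\<^sup>2 \<noteq> 0"
proof
  assume equilateral: "x * (y - z)\<^sup>2 + y * (z - x)\<^sup>2 + z * (x - y)\<^sup>2 = 0"
  have "collinear {OA, OB, OC}"
    by (subst collinear_bary_iff [OF noncollinear OA_eq [OF A_HB_HC] OB_eq [OF B_HC_HA] OC_eq [OF C_HA_HB]],
        (use OA_weights OB_weights OC_weights in linarith)+)
      (rule trans [of _ "- 8 * x * y * z * (x + y + z) ^ 3
                          * (x * (y - z)\<^sup>2 + y * (z - x)\<^sup>2 + z * (x - y)\<^sup>2)"],
        algebra, simp add: equilateral)
  with OA_OB_OC show False ..
qed

lemma Or_eq:
  "Or = bary A B C (conway y z x * conway z x y + 4 * x * y * z * (y + z - x))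
                   (conway z x y * conway x y z + 4 * x * y * z * (z + x - y))
                   (conway x y z * conway y z x + 4 * x * y * z * (x + y - z))"
  by (rule circumcenter_eqI [OF OA_OB_OC];
      rule dist_bary_eqI, (rule refl OA_eq [OF A_HB_HC] OB_eq [OF B_HC_HA] OC_eq [OF C_HA_HB])+,
      (use Or_weights OA_weights OB_weights OC_weights in linarith)+,
      simp add: bary_inner_def sides conway_def, algebra)

lemma collinear_Or_H_X: "collinear {Or, H, X}"
  by (subst collinear_bary_iff [OF noncollinear Or_eq H_eq refl],
      (use H_weights Or_weights X_weights [OF not_equilateral] in linarith)+,
      unfold conway_def common_point_weight_def, algebra)

lemma X_on_circles:
  "on_circumcircle X A HB HC \<and> on_circumcircle X B HC HA \<and> on_circumcircle X C HA HB"
  using X_on_circle_A [OF A_HB_HC not_equilateral]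
    X_on_circle_B [OF B_HC_HA] X_on_circle_C [OF C_HA_HB] not_equilateral
  unfolding on_circumcircle_def by (simp add: dist_commute algebra_simps)

lemma X_unique:
  assumes "on_circumcircle Y A HB HC" "on_circumcircle Y B HC HA" "on_circumcircle Y C HA HB"
  shows "Y = X"
  using X_on_circles assms
  by (intro eq_if_same_dists_to_noncollinear [OF OA_OB_OC]) (simp_all add: on_circumcircle_def dist_commute)

end

end

theorem proposition5p6:
  fixes A B C :: complex
  assumes "triangle A B C"
  defines "I \<equiv> incenter A B C"
      and "H \<equiv> orthocenter A B C"
  defines "HA \<equiv> orthocenter B I C"
      and "HB \<equiv> orthocenter C I A"
      and "HC \<equiv> orthocenter A I B"
  defines "OA \<equiv> circumcenter A HB HC"
      and "OB \<equiv> circumcenter B HC HA"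
      and "OC \<equiv> circumcenter C HA HB"
  defines "Or \<equiv> circumcenter OA OB OC"
  assumes "triangle A HB HC" and "triangle B HC HA" and "triangle C HA HB"
      and "triangle OA OB OC"
  shows "(\<exists>X. on_circumcircle X A HB HC \<and> on_circumcircle X B HC HA \<and> on_circumcircle X C HA HB)
       \<and> (\<forall>X. on_circumcircle X A HB HC \<and> on_circumcircle X B HC HA \<and> on_circumcircle X C HA HB
              \<longrightarrow> collinear {Or, H, X})"
proof -
  obtain x y z where tl: "tangent_lengths A B C x y z"
    using tangent_lengths_exist assms(1) unfolding triangle_def by blast
  note nondegenerate = assms(11-14) [unfolded triangle_def I_def HA_def HB_def HC_def OA_def OB_def OC_def]
  show ?thesis
    unfolding I_def H_def HA_def HB_def HC_def OA_def OB_def OC_def Or_def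
    using tangent_lengths.X_on_circles [OF tl nondegenerate]
      tangent_lengths.X_unique [OF tl nondegenerate]
      tangent_lengths.collinear_Or_H_X [OF tl nondegenerate]
    by blast
qed

end
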